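(* For integers $n>4$ and $k\ge1$, $F_{4,k}(n)=0$ if and only if $(k,n)\in\{(3,8),(5,8),(6,12),(7,8)\}$. In particular $F_{4,k}$ has no positive integer root for $k>7$.
   Context: For an integer $j\ge0$, $\binom{x}{j}=x(x-1)\cdots(x-j+1)/j!$ as a polynomial in $x$, and $\binom{x}{j}=0$ for $j<0$. For integers $s\ge1$, $k\ge1$, the Moser polynomial is $F_{s,k}(x)=\sum_{p=1}^{s}(-1)^{p-1}p^{k-1}\binom{x}{s-p}$. *)

theory Defs
  imports Complex_Main
begin

text \<open>Since 1 <= p <= s, the index s-p is never negative.\<close>
definition moser :: "nat \<Rightarrow> nat \<Rightarrow> real \<Rightarrow> real" where
  "moser s k x = (\<Sum>p=1..s. (-1) ^ (p - 1) * (of_nat p) ^ (k - 1) * (x gchoose (s - p)))"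

end

theory Submission
  imports Defs
begin

text \<open>Write \<open>k = j + 1\<close>. Then \<open>6 F_{4,k}(n) = n S(n) - 6\<cdot>4^j\<close> for an integral cofactor \<open>S\<close>,
  so a positive root \<open>n\<close> divides \<open>3\<cdot>2^(2j+1)\<close> and is \<open>2^i\<close> or \<open>3\<cdot>2^i\<close>. If \<open>n \<le> 24\<close> and
  \<open>j \<ge> 12\<close> the term \<open>4^j\<close> dominates and \<open>6F < 0\<close>; if \<open>n \<ge> 2^(j+3)\<close> the cubic term dominates
  and \<open>6F > 0\<close>. In between, \<open>4 \<le> i \<le> 2j - 3\<close>, both \<open>n\<close> and \<open>S\<close> would be divisible by 16,
  but \<open>S \<equiv> 2 (3^(j+1) + 1)\<close> modulo 16 and \<open>3^e + 1\<close> is never divisible by 8. The finitely many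
  remaining pairs \<open>(j, i)\<close> are checked directly.\<close>

definition moser4_cofactor :: "nat \<Rightarrow> int \<Rightarrow> int" where
  "moser4_cofactor j n = (n - 1) * (n - 2) - 3 * 2^j * (n - 1) + 6 * 3^j"

definition moser4_num :: "nat \<Rightarrow> int \<Rightarrow> int" where
  "moser4_num j n = n * moser4_cofactor j n - 6 * 4^j"

lemma moser4_Suc_eq_num: "moser 4 (Suc j) (of_int n) = of_int (moser4_num j n) / 6"
  unfolding moser_def moser4_num_def moser4_cofactor_def
  by (simp add: numeral_eq_Suc gbinomial_Suc atMost_Suc field_simps sum.atLeast_Suc_atMost)

lemma pos_dvd_three_mult_pow2:
  fixes n :: int
  assumes "0 < n" "n dvd 3 * 2^e"
  shows "\<exists>i\<le>e. n = 2^i \<or> n = 3 * 2^i"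
  using assms
proof (induction e arbitrary: n)
  case 0
  then have "n \<le> 3" by (simp add: zdvd_imp_le)
  with 0 have "n = 1 \<or> n = 2 \<or> n = 3" by auto
  with 0 show ?case by auto
next
  case (Suc e)
  show ?case
  proof (cases "even n")
    case True
    then obtain n' where n': "n = 2 * n'" by blast
    with Suc.prems have "0 < n'" "n' dvd 3 * 2^e" by auto
    from Suc.IH[OF this] obtain i where "i \<le> e" "n' = 2^i \<or> n' = 3 * 2^i" by blast
    with n' show ?thesis by (intro exI[of _ "Suc i"]) auto
  next
    case False
    then have "coprime n (2^Suc e)" by (simp add: coprime_commute)
    with Suc.prems(2) have "n dvd 3" by (metis coprime_dvd_mult_left_iff)
    then have "n \<in> {1, 2, 3}" using Suc.prems(1) zdvd_imp_le[of n 3] by auto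
    with False have "n = 1 \<or> n = 3" by auto
    then show ?thesis by (intro exI[of _ 0]) auto
  qed
qed

lemma three_pow_mod_8: "(3::int)^e mod 8 \<in> {1, 3}"
proof (induction e)
  case (Suc e)
  have "(3::int)^Suc e mod 8 = 3 * (3^e mod 8) mod 8" by (simp add: mod_mult_right_eq)
  with Suc show ?case by auto
qed simp

lemma not_8_dvd_three_pow_plus_1: "\<not> (8::int) dvd 3^e + 1"
proof -
  have "\<not> 8 dvd x + 1" if "x mod 8 = 1 \<or> x mod 8 = 3" for x :: int
    using that by presburger
  then show ?thesis using three_pow_mod_8[of e] by auto
qed

lemma not_16_dvd_moser4_cofactor:
  assumes "16 dvd n" "4 \<le> j"
  shows "\<not> 16 dvd moser4_cofactor j n"
proof
  assume S: "16 dvd moser4_cofactor j n"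
  obtain t where t: "n = 16 * t" using assms(1) by blast
  have "(2::int)^j = 2^(4 + (j - 4))" using assms(2) by simp
  then obtain u where u: "(2::int)^j = 16 * u" by (auto simp: power_add)
  have "moser4_cofactor j n = 16 * (16 * t * t - 3 * t - 48 * u * t + 3 * u) + 2 * (3^Suc j + 1)"
    unfolding moser4_cofactor_def t u by (simp add: algebra_simps)
  with S have "16 dvd 2 * ((3::int)^Suc j + 1)"
    by (metis dvd_add_right_iff dvd_triv_left)
  then have "8 dvd (3::int)^Suc j + 1" by presburger
  then show False using not_8_dvd_three_pow_plus_1 by blast
qed

lemma moser4_num_pos:
  assumes "8 * 2^j \<le> n"
  shows "0 < moser4_num j n"
proof -
  define A :: int where "A = 2^j"
  have A1: "1 \<le> A" unfolding A_def by simp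
  have n: "8 * A \<le> n" using assms unfolding A_def .
  have "n - 1 \<le> (n - 1) * (n - 2 - 3 * A)"
    using n A1 by (intro mult_le_cancel_left1[THEN iffD2]) auto
  moreover have "moser4_cofactor j n = (n - 1) * (n - 2 - 3 * A) + 6 * 3^j"
    unfolding moser4_cofactor_def A_def by (simp add: algebra_simps)
  moreover have "0 \<le> 6 * (3::int)^j" by simp
  ultimately have "n - 1 \<le> moser4_cofactor j n" by linarith
  then have "n * (n - 1) \<le> n * moser4_cofactor j n"
    using n A1 by (intro mult_left_mono) auto
  moreover have "8 * A * (8 * A - 1) \<le> n * (n - 1)"
    using n A1 by (intro mult_mono) auto
  moreover have "A * 1 \<le> A * A"
    using A1 by (intro mult_left_mono) auto
  then have "6 * A * A < 8 * A * (8 * A - 1)"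
    using A1 by (simp add: algebra_simps)
  moreover have "(4::int)^j = A * A"
    unfolding A_def by (simp flip: power_mult_distrib)
  ultimately show ?thesis unfolding moser4_num_def by linarith
qed

lemma four_pow_ge_31_mult_three_pow: "12 \<le> j \<Longrightarrow> 31 * (3::int)^j \<le> 4^j"
proof (induction j rule: dec_induct)
  case (step m)
  have "(0::int) \<le> 3^m" by simp
  then show ?case unfolding power_Suc using step.IH by linarith
qed simp

lemma moser4_num_neg:
  assumes "0 < n" "n \<le> 24" "12 \<le> j"
  shows "moser4_num j n < 0"
proof -
  define A :: int where "A = 2^j"
  define B :: int where "B = 3^j"
  have "(3::int)^12 \<le> B" unfolding B_def using assms(3) by (intro power_increasing) auto
  then have B: "531441 \<le> B" by simp
  have AB: "31 * B \<le> A * A"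
    using four_pow_ge_31_mult_three_pow[OF assms(3)]
    unfolding A_def B_def by (simp flip: power_mult_distrib)
  have "n * (n - 1) * (n - 2) \<le> 24 * 23 * 22"
  proof (cases "n = 1")
    case False
    with assms(1,2) show ?thesis by (intro mult_mono) auto
  qed simp
  moreover have "0 \<le> A * (n * (n - 1))"
    using assms(1) unfolding A_def by simp
  moreover have "B * n \<le> B * 24"
    using assms(2) B by (intro mult_left_mono) auto
  moreover have "moser4_num j n = n * (n - 1) * (n - 2) - 3 * (A * (n * (n - 1))) + 6 * (B * n) - 6 * (A * A)"
    unfolding moser4_num_def moser4_cofactor_def A_def B_def
    by (simp add: algebra_simps flip: power_mult_distrib)
  ultimately show ?thesis using AB B by linarith
qed

definition moser4_int_roots :: "(nat \<times> int) set" where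
  "moser4_int_roots = {(1, 1), (1, 2), (1, 3), (2, 2), (2, 3), (2, 4), (3, 3), (3, 4), (3, 8),
     (4, 4), (5, 8), (6, 12), (7, 8)}"

lemma moser4_num_eq_0_small_cases:
  assumes "j \<le> 11" "i \<le> 9" "m = 1 \<or> m = 3" "moser4_num j (m * 2^i) = 0"
  shows "(Suc j, m * 2^i) \<in> moser4_int_roots"
proof -
  have "j \<in> {0, 1, 2, 3, 4, 5, 6, 7, 8, 9, 10, 11}" "i \<in> {0, 1, 2, 3, 4, 5, 6, 7, 8, 9}"
    using assms(1,2) by (simp_all, presburger+)
  then show ?thesis using assms(3,4) unfolding moser4_int_roots_def
    by (simp only: insert_iff empty_iff) (elim disjE; simp add: moser4_num_def moser4_cofactor_def)
qed

lemma moser4_num_eq_0_imp_mem_roots: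
  assumes n: "0 < n" and root: "moser4_num j n = 0"
  shows "(Suc j, n) \<in> moser4_int_roots"
proof -
  define S where "S = moser4_cofactor j n"
  have "(6::int) * 4^j = 3 * 2^(2 * j + 1)" by (simp add: power_mult)
  with root have nS: "n * S = 3 * 2^(2 * j + 1)" unfolding moser4_num_def S_def by simp
  then have "n dvd 3 * 2^(2 * j + 1)" by (metis dvd_triv_left)
  then obtain i m where i: "i \<le> 2 * j + 1" and m: "m = 1 \<or> m = (3::int)" and nm: "n = m * 2^i"
    using pos_dvd_three_mult_pow2[OF n] by (metis mult_1)
  consider "j \<le> 11" "i \<le> 9" | "12 \<le> j" "i \<le> 3" | "5 \<le> j" "2 * j - 2 \<le> i"
    | "4 \<le> j" "4 \<le> i" "i \<le> 2 * j - 3"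
    using i by linarith
  then show ?thesis
  proof cases
    case 1
    then show ?thesis using moser4_num_eq_0_small_cases m root nm by blast
  next
    case 2
    have "(2::int)^i \<le> 2^3" using \<open>i \<le> 3\<close> by (intro power_increasing) auto
    then have "n \<le> 24" using nm m by auto
    with moser4_num_neg[OF n _ \<open>12 \<le> j\<close>] root show ?thesis by simp
  next
    case 3
    have "8 * 2^j = (2::int)^(j + 3)" by (simp add: power_add)
    also have "\<dots> \<le> 2^i" using 3 by (intro power_increasing) auto
    also have "\<dots> \<le> n" using nm m by auto
    finally show ?thesis using moser4_num_pos root by fastforce
  next
    case 4
    have "(2::int)^i = 2^(4 + (i - 4))" using 4 by simp
    then have "16 dvd n" using nm by (simp add: power_add)
    have "2 * j + 1 = i + (2 * j + 1 - i)" using i by simp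
    then have "m * S * 2^i = 3 * 2^(2 * j + 1 - i) * 2^i"
      using nS nm by (metis mult.assoc mult.commute power_add)
    then have "m * S = 3 * 2^(2 * j + 1 - i)" by simp
    also have "\<dots> = 3 * 2^(4 + (2 * j + 1 - i - 4))" using 4 by simp
    also have "\<dots> = 3 * 16 * 2^(2 * j + 1 - i - 4)" by (simp add: power_add)
    finally have "16 dvd m * S" by simp
    then have "16 dvd S" using m by (elim disjE; simp; presburger)
    with not_16_dvd_moser4_cofactor[OF \<open>16 dvd n\<close> \<open>4 \<le> j\<close>] show ?thesis
      unfolding S_def by blast
  qed
qed

lemma moser4_int_roots_iff:
  assumes "1 \<le> k" "0 < n"
  shows "moser 4 k (of_int n) = 0 \<longleftrightarrow> (k, n) \<in> moser4_int_roots"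
proof -
  obtain j where k: "k = Suc j" using assms(1) by (cases k) auto
  have "moser4_num j n = 0" if "(Suc j, n) \<in> moser4_int_roots"
    using that by (auto simp: moser4_int_roots_def moser4_num_def moser4_cofactor_def)
  then have "moser4_num j n = 0 \<longleftrightarrow> (Suc j, n) \<in> moser4_int_roots"
    using moser4_num_eq_0_imp_mem_roots[OF assms(2)] by blast
  then show ?thesis unfolding k moser4_Suc_eq_num by simp
qed

theorem mainTheorem14:
  shows "(\<forall>(n::int) k::nat. n > 4 \<longrightarrow> k \<ge> 1 \<longrightarrow>
            (moser 4 k (of_int n) = 0 \<longleftrightarrow> (k, n) \<in> {(3, 8), (5, 8), (6, 12), (7, 8)}))
       \<and> (\<forall>(n::int) k::nat. k > 7 \<longrightarrow> n > 0 \<longrightarrow> moser 4 k (of_int n) \<noteq> 0)"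
proof (intro conjI allI impI)
  fix n :: int and k :: nat
  assume "4 < n" "1 \<le> k"
  with moser4_int_roots_iff[of k n]
  show "moser 4 k (of_int n) = 0 \<longleftrightarrow> (k, n) \<in> {(3, 8), (5, 8), (6, 12), (7, 8)}"
    unfolding moser4_int_roots_def by auto
next
  fix n :: int and k :: nat
  assume "7 < k" "0 < n"
  with moser4_int_roots_iff[of k n] show "moser 4 k (of_int n) \<noteq> 0"
    unfolding moser4_int_roots_def by auto
qed

end
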